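(* Let $q=p^s$ with $p$ prime, $R_T=\mathbb{F}_q[T]$, $P\in R_T$ monic irreducible of degree $d$. For $m\ge1$ and $\beta\in\mathbb{N}$ let $v_m(\beta)$ be the number of distinct cyclic subgroups of order $p^m$ of $(R_T/(P^{\beta}))^{\ast}$. Let $n\geq 2$, $\alpha\in\mathbb{N}$ and $\delta=\left[\frac{\alpha-1}{p}\right]+1$. Then \[ v_n(\alpha)=\frac{q^{d\left(\alpha-\lceil\alpha/p\rceil\right)}}{p}\,v_{n-1}(\delta). \]
   Context: $[x]$ denotes the floor and $\lceil x\rceil$ the ceiling of a real number $x$. *)

theory Defs
  imports "HOL-Computational_Algebra.Polynomial" "HOL-Computational_Algebra.Factorial_Ring"
          "HOL-Algebra.Ring" "HOL-Algebra.Generated_Groups"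
begin

text \<open>The residue ring R_T/(M) for R_T = k[T], modelled on the canonical
  representatives (polynomials reduced modulo M), with the induced operations.\<close>
definition poly_residue_ring :: "'a::field poly \<Rightarrow> 'a poly ring" where
  "poly_residue_ring M =
     \<lparr>carrier = {f. f mod M = f},
      monoid.mult = (\<lambda>f g. (f * g) mod M),
      one = 1 mod M,
      zero = 0,
      add = (\<lambda>f g. (f + g) mod M)\<rparr>"

definition poly_residue_units :: "'a::field poly \<Rightarrow> 'a poly monoid" where
  "poly_residue_units M = units_of (poly_residue_ring M)"

definition cyc_sub_count :: "'a::field poly \<Rightarrow> nat \<Rightarrow> nat \<Rightarrow> nat \<Rightarrow> nat" where
  "cyc_sub_count P p m \<beta> =
     card {H. subgroup H (poly_residue_units (P ^ \<beta>)) \<and>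
              (\<exists>g\<in>carrier (poly_residue_units (P ^ \<beta>)).
                  H = generate (poly_residue_units (P ^ \<beta>)) {g}) \<and>
              card H = p ^ m}"

end

theory Submission
  imports Defs "HOL-Algebra.Multiplicative_Group" "HOL-Number_Theory.Residues"
    "HOL-Computational_Algebra.Polynomial_Factorial"
begin

text \<open>
  Cyclic subgroups of order m are counted by the elements of order m, each subgroup containing
  totient m of them. For m = p^n the elements of order m in (R_T/(P^alpha))^* are the solutions of
  u^(p^n) = 1 minus those of u^(p^(n-1)) = 1. As p is the characteristic,
  u^(p^n) - 1 = (u^(p^(n-1)) - 1)^p, and P^alpha divides a p-th power exactly when P^delta
  divides its base, delta = ceil(alpha/p). So u solves the first equation modulo P^alpha iff
  u mod P^delta solves the second modulo P^delta, and every residue modulo P^delta has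
  q^(d(alpha - delta)) lifts modulo P^alpha. Both differences of solution counts therefore agree up
  to the factor q^(d(alpha - delta)), and totient (p^n) = p * totient (p^(n-1)) for n >= 2 supplies
  the division by p.
\<close>

lemma div_round_up_le_iff:
  fixes a p m :: nat
  assumes "p > 0"
  shows "(a + p - 1) div p \<le> m \<longleftrightarrow> a \<le> p * m"
proof -
  have "(a + p - 1) div p \<le> m \<longleftrightarrow> a + p - 1 < (m + 1) * p"
    using assms by (simp add: less_Suc_eq_le[symmetric] div_less_iff_less_mult)
  also have "\<dots> \<longleftrightarrow> a \<le> p * m" using assms by (simp add: algebra_simps, arith)
  finally show ?thesis .
qed

lemma div_round_up_bounds:
  fixes a p :: nat
  assumes "p > 0"
  shows "real a \<le> real p * real ((a + p - 1) div p)" "real p * real ((a + p - 1) div p) \<le> real a + real p - 1"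
proof -
  have "a \<le> p * ((a + p - 1) div p)" using div_round_up_le_iff[OF assms] by blast
  then have "real a \<le> real (p * ((a + p - 1) div p))" by (simp only: of_nat_le_iff)
  then show "real a \<le> real p * real ((a + p - 1) div p)" by simp
  have "p * ((a + p - 1) div p) \<le> a + p - 1" by (simp add: mult.commute)
  then have "real (p * ((a + p - 1) div p)) \<le> real (a + p - 1)" by (simp only: of_nat_le_iff)
  then show "real p * real ((a + p - 1) div p) \<le> real a + real p - 1" using assms by (simp add: of_nat_diff)
qed

lemma nat_ceiling_divide_eq:
  assumes "p > 0"
  shows "nat \<lceil>real a / real p\<rceil> = (a + p - 1) div p"
proof -
  have "\<lceil>real a / real p\<rceil> = int ((a + p - 1) div p)"
    using div_round_up_bounds[OF assms, of a] assms by (intro ceiling_unique) (simp_all add: field_simps)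
  then show ?thesis by simp
qed

lemma nat_floor_pred_divide_eq:
  assumes "p > 0"
  shows "nat (\<lfloor>(real a - 1) / real p\<rfloor> + 1) = (a + p - 1) div p"
proof -
  have "\<lfloor>(real a - 1) / real p\<rfloor> = int ((a + p - 1) div p) - 1"
    using div_round_up_bounds[OF assms, of a] assms by (intro floor_unique) (simp_all add: field_simps)
  then show ?thesis by simp
qed

lemma totient_prime_power_eq_mult:
  assumes "prime p" "n \<ge> 2"
  shows "totient (p ^ n) = p * totient (p ^ (n - 1))"
proof -
  obtain k where "n = Suc (Suc k)" using assms(2) by (metis add_2_eq_Suc le_iff_add)
  then show ?thesis
    using totient_prime_power_Suc[OF assms(1), of "Suc k"] totient_prime_power_Suc[OF assms(1), of k]
    by simp
qed

section \<open>Elements of prime power order and cyclic subgroups\<close>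

lemma (in group) card_generators_eq_totient:
  assumes fin: "finite (carrier G)" and g: "g \<in> carrier G"
  shows "card {x \<in> generate G {g}. ord x = ord g} = totient (ord g)"
proof -
  have ord_pos: "ord g \<noteq> 0" using ord_ge_1[OF fin g] by simp
  have gen: "generate G {g} = {g [^] k | k. k \<in> {0..ord g - 1}}"
    using generate_pow_nat[OF g ord_pos] ord_elems_inf_carrier[OF g ord_pos] by simp
  have "{x \<in> generate G {g}. ord x = ord g} = (\<lambda>k. g [^] k) ` totatives (ord g)"
  proof (intro equalityI subsetI)
    fix x assume "x \<in> {x \<in> generate G {g}. ord x = ord g}"
    then obtain k where k: "k \<le> ord g - 1" "x = g [^] k" "ord (g [^] k) = ord g"
      unfolding gen by auto
    then have cop: "coprime k (ord g)" using pow_ord_eq_ord_iff[OF fin g] by simp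
    show "x \<in> (\<lambda>k. g [^] k) ` totatives (ord g)"
    proof (cases "k = 0")
      case True
      then have "ord g = 1" using cop by simp
      then show ?thesis using k True pow_ord_eq_1[OF g] by (auto simp: in_totatives_iff)
    next
      case False
      then show ?thesis using k cop ord_pos by (auto simp: in_totatives_iff)
    qed
  next
    fix x assume "x \<in> (\<lambda>k. g [^] k) ` totatives (ord g)"
    then obtain k where "k \<in> totatives (ord g)" "x = g [^] k" by blast
    then show "x \<in> {x \<in> generate G {g}. ord x = ord g}"
      using generate_pow_nat[OF g ord_pos] pow_ord_eq_ord_iff[OF fin g]
      by (auto simp: in_totatives_iff)
  qed
  moreover have "inj_on (\<lambda>k. g [^] k) (totatives (ord g))"
    by (rule inj_on_subset[OF ord_inj'[OF g]]) (auto simp: in_totatives_iff)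
  ultimately show ?thesis by (simp add: card_image totient_def)
qed

lemma (in group) generate_eq_of_ord_eq_card:
  assumes fin: "finite (carrier G)" and H: "subgroup H G" and g: "g \<in> H" "ord g = card H"
  shows "generate G {g} = H"
proof (rule card_subset_eq)
  have "H \<subseteq> carrier G" using H by (rule subgroup.subset)
  then show "finite H" using fin by (rule finite_subset)
  have g_carrier: "g \<in> carrier G" using H g(1) by (rule subgroup.mem_carrier)
  show "generate G {g} \<subseteq> H" using H g(1) by (intro generate_subgroup_incl) simp_all
  show "card (generate G {g}) = card H" using generate_pow_card[OF g_carrier] g(2) by simp
qed

lemma (in group) card_ord_eq_cyclic_subgroups_mult_totient:
  assumes fin: "finite (carrier G)"
  shows "card {g \<in> carrier G. ord g = m} =
         card {H. subgroup H G \<and> (\<exists>g\<in>carrier G. H = generate G {g}) \<and> card H = m} * totient m"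
proof -
  define C where "C = {H. subgroup H G \<and> (\<exists>g\<in>carrier G. H = generate G {g}) \<and> card H = m}"
  have in_C_iff: "H \<in> C \<longleftrightarrow> generate G {g} = H" if H: "subgroup H G" and g: "g \<in> H" "ord g = m" for H g
  proof
    assume "H \<in> C"
    then have "card H = m" by (simp add: C_def)
    then show "generate G {g} = H" using generate_eq_of_ord_eq_card[OF fin H g(1)] g(2) by simp
  next
    assume gen: "generate G {g} = H"
    have "g \<in> carrier G" using H g(1) by (rule subgroup.mem_carrier)
    then have "card H = m" using generate_pow_card[of g] gen g(2) by simp
    then show "H \<in> C" using H gen \<open>g \<in> carrier G\<close> unfolding C_def by blast
  qed
  have elems: "{g \<in> carrier G. ord g = m} = (\<Union>H\<in>C. {g \<in> H. ord g = m})"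
  proof (intro equalityI subsetI)
    fix g assume g: "g \<in> {g \<in> carrier G. ord g = m}"
    then have "subgroup (generate G {g}) G" "g \<in> generate G {g}"
      by (simp_all add: generate_is_subgroup generate.incl)
    then show "g \<in> (\<Union>H\<in>C. {g \<in> H. ord g = m})" using in_C_iff g by blast
  next
    fix g assume "g \<in> (\<Union>H\<in>C. {g \<in> H. ord g = m})"
    then obtain H where "subgroup H G" "g \<in> H" "ord g = m" by (auto simp: C_def)
    then show "g \<in> {g \<in> carrier G. ord g = m}" by (simp add: subgroup.mem_carrier)
  qed
  have "C \<subseteq> Pow (carrier G)" unfolding C_def using subgroup.subset by blast
  then have finite_C: "finite C" and finite_elems: "\<forall>H\<in>C. finite {g \<in> H. ord g = m}"
    using fin by (auto intro: finite_subset)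
  have disjoint: "\<forall>H\<in>C. \<forall>H'\<in>C. H \<noteq> H' \<longrightarrow> {g \<in> H. ord g = m} \<inter> {g \<in> H'. ord g = m} = {}"
  proof (intro ballI impI equals0I)
    fix H H' g assume HH': "H \<in> C" "H' \<in> C" "H \<noteq> H'"
      and "g \<in> {g \<in> H. ord g = m} \<inter> {g \<in> H'. ord g = m}"
    then have "generate G {g} = H" "generate G {g} = H'" using in_C_iff by (auto simp: C_def)
    then show False using HH'(3) by simp
  qed
  have card_elems: "card {g \<in> H. ord g = m} = totient m" if "H \<in> C" for H
  proof -
    have "\<exists>h\<in>carrier G. H = generate G {h}" "card H = m" using that by (simp_all add: C_def)
    then obtain h where h: "h \<in> carrier G" "H = generate G {h}" "card H = m" by blast
    then show ?thesis using card_generators_eq_totient[OF fin h(1)] generate_pow_card[OF h(1)] by simp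
  qed
  have "card {g \<in> carrier G. ord g = m} = (\<Sum>H\<in>C. card {g \<in> H. ord g = m})"
    unfolding elems by (rule card_UN_disjoint[OF finite_C finite_elems disjoint])
  also have "\<dots> = card C * totient m" using card_elems by simp
  finally show ?thesis unfolding C_def .
qed

lemma (in group) ord_eq_prime_power_iff:
  assumes g: "g \<in> carrier G" and p: "prime p" and n: "n \<ge> 1"
  shows "ord g = p ^ n \<longleftrightarrow> g [^] (p ^ n) = \<one> \<and> g [^] (p ^ (n - 1)) \<noteq> \<one>"
proof -
  have "ord g dvd p ^ n \<and> \<not> ord g dvd p ^ (n - 1) \<longleftrightarrow> ord g = p ^ n"
  proof
    assume h: "ord g dvd p ^ n \<and> \<not> ord g dvd p ^ (n - 1)"
    then obtain i where i: "i \<le> n" "ord g = p ^ i" using divides_primepow_nat[OF p] by blast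
    have "\<not> i \<le> n - 1" using h i(2) le_imp_power_dvd by metis
    then have "i = n" using i(1) by linarith
    then show "ord g = p ^ n" using i(2) by simp
  next
    assume "ord g = p ^ n"
    moreover have "p ^ (n - 1) < p ^ n" using p n prime_gt_1_nat by (intro power_strict_increasing) auto
    ultimately show "ord g dvd p ^ n \<and> \<not> ord g dvd p ^ (n - 1)"
      using p prime_gt_0_nat by (auto dest: dvd_imp_le)
  qed
  then show ?thesis using pow_eq_id[OF g] by simp
qed

lemma (in group) card_ord_eq_prime_power:
  assumes fin: "finite (carrier G)" and p: "prime p" and n: "n \<ge> 1"
  shows "card {g \<in> carrier G. ord g = p ^ n} =
         card {g \<in> carrier G. g [^] (p ^ n) = \<one>} - card {g \<in> carrier G. g [^] (p ^ (n - 1)) = \<one>}"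
proof -
  have "p ^ n = p ^ (n - 1) * p" using n by (simp add: power_eq_if)
  then have "{g \<in> carrier G. g [^] (p ^ (n - 1)) = \<one>} \<subseteq> {g \<in> carrier G. g [^] (p ^ n) = \<one>}"
    by (auto simp: nat_pow_pow[symmetric])
  moreover have "{g \<in> carrier G. ord g = p ^ n} =
      {g \<in> carrier G. g [^] (p ^ n) = \<one>} - {g \<in> carrier G. g [^] (p ^ (n - 1)) = \<one>}"
    using ord_eq_prime_power_iff[OF _ p n] by blast
  moreover have "finite {g \<in> carrier G. g [^] (p ^ (n - 1)) = \<one>}" using fin by simp
  ultimately show ?thesis by (simp add: card_Diff_subset)
qed

section \<open>Counting residues of polynomials\<close>

lemma polys_degree_less_eq_image_Poly:
  "{f :: 'a::zero poly. f = 0 \<or> degree f < m} = Poly ` {xs. length xs = m}"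
proof (intro equalityI subsetI)
  fix f :: "'a poly" assume f: "f \<in> {f. f = 0 \<or> degree f < m}"
  have "f = Poly (map (Polynomial.coeff f) [0..<m])"
  proof (rule poly_eqI)
    fix i
    show "Polynomial.coeff f i = Polynomial.coeff (Poly (map (Polynomial.coeff f) [0..<m])) i"
      using f by (cases "i < m") (auto simp: nth_default_def coeff_eq_0)
  qed
  then show "f \<in> Poly ` {xs. length xs = m}" by force
next
  fix f :: "'a poly" assume "f \<in> Poly ` {xs. length xs = m}"
  then obtain xs where "length xs = m" "f = Poly xs" by blast
  show "f \<in> {f. f = 0 \<or> degree f < m}"
  proof (cases "m = 0")
    case False
    have "degree f \<le> m - 1"
      using \<open>length xs = m\<close> False by (intro degree_le) (auto simp: \<open>f = Poly xs\<close> nth_default_def)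
    then have "degree f < m" using False by linarith
    then show ?thesis by simp
  qed (use \<open>length xs = m\<close> \<open>f = Poly xs\<close> in simp)
qed

lemma finite_polys_degree_less: "finite {f :: 'a::{zero,finite} poly. f = 0 \<or> degree f < m}"
  using finite_lists_length_eq[of "UNIV :: 'a set" m] by (simp add: polys_degree_less_eq_image_Poly)

lemma card_polys_degree_less:
  "card {f :: 'a::{zero,finite} poly. f = 0 \<or> degree f < m} = card (UNIV :: 'a set) ^ m"
proof -
  have "inj_on Poly {xs :: 'a list. length xs = m}"
  proof (rule inj_onI)
    fix xs ys :: "'a list"
    assume lens: "xs \<in> {xs. length xs = m}" "ys \<in> {xs. length xs = m}" and "Poly xs = Poly ys"
    then have "nth_default 0 xs = nth_default 0 ys" by (metis coeff_Poly_eq)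
    then show "xs = ys"
      using lens by (intro nth_equalityI) (simp_all, metis nth_default_nth)
  qed
  then show ?thesis
    using card_lists_length_eq[of "UNIV :: 'a set" m]
    by (simp add: polys_degree_less_eq_image_Poly card_image)
qed

lemma mod_poly_eq_self_iff:
  fixes f M :: "'a::field poly"
  assumes "M \<noteq> 0"
  shows "f mod M = f \<longleftrightarrow> f = 0 \<or> degree f < degree M"
  using degree_mod_less[OF assms, of f] mod_poly_less[of f M] by auto

lemma finite_reduced_mod:
  fixes M :: "'a::{field,finite} poly"
  assumes "M \<noteq> 0"
  shows "finite {f. f mod M = f}"
  using finite_polys_degree_less[of "degree M"] by (simp add: mod_poly_eq_self_iff[OF assms])

lemma mod_poly_add_mult_eq_self_iff:
  fixes w t M N :: "'a::field poly"
  assumes M: "M \<noteq> 0" and N: "N \<noteq> 0" and deg: "degree M \<le> degree N" and w: "w mod M = w"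
  shows "(w + M * t) mod N = w + M * t \<longleftrightarrow> t = 0 \<or> degree t < degree N - degree M"
proof (cases "t = 0")
  case True
  then show ?thesis using w deg by (auto simp: mod_poly_eq_self_iff M N)
next
  case False
  have "w + M * t \<noteq> 0 \<and> degree (w + M * t) = degree M + degree t"
  proof (cases "w = 0")
    case False
    then have "degree w < degree M" using w by (simp add: mod_poly_eq_self_iff M)
    then have "degree w < degree (M * t)" using M \<open>t \<noteq> 0\<close> by (simp add: degree_mult_eq)
    then show ?thesis using M \<open>t \<noteq> 0\<close>
      by (metis degree_add_eq_right degree_mult_eq add_0 degree_0 not_less_zero)
  qed (use M \<open>t \<noteq> 0\<close> in \<open>simp add: degree_mult_eq\<close>)
  then show ?thesis using False deg by (auto simp: mod_poly_eq_self_iff N)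
qed

lemma card_mod_preimage:
  fixes M N :: "'a::{field,finite} poly"
  assumes MN: "M dvd N" and N: "N \<noteq> 0" and S: "S \<subseteq> {w. w mod M = w}"
  shows "card {u. u mod N = u \<and> u mod M \<in> S} = card (UNIV :: 'a set) ^ (degree N - degree M) * card S"
proof -
  have M: "M \<noteq> 0" using MN N by auto
  have deg: "degree M \<le> degree N" using MN N by (rule dvd_imp_degree_le)
  define L where "L = {t :: 'a poly. t = 0 \<or> degree t < degree N - degree M}"
  have reduced_iff: "(w + M * t) mod N = w + M * t \<longleftrightarrow> t \<in> L" if "w \<in> S" for w t
    using mod_poly_add_mult_eq_self_iff[OF M N deg, of w t] that S by (auto simp: L_def)
  have "{u. u mod N = u \<and> u mod M \<in> S} = (\<lambda>(w, t). w + M * t) ` (S \<times> L)"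
  proof (intro equalityI subsetI)
    fix u assume u: "u \<in> {u. u mod N = u \<and> u mod M \<in> S}"
    have u_eq: "u = u mod M + M * (u div M)" by simp
    then have "u div M \<in> L" using u reduced_iff[of "u mod M" "u div M"] by simp
    then show "u \<in> (\<lambda>(w, t). w + M * t) ` (S \<times> L)"
      using u u_eq by (intro image_eqI[where x="(u mod M, u div M)"]) simp_all
  next
    fix u assume "u \<in> (\<lambda>(w, t). w + M * t) ` (S \<times> L)"
    then obtain w t where wt: "w \<in> S" "t \<in> L" "u = w + M * t" by auto
    have "w mod M = w" using S wt(1) by blast
    then have "u mod M = w" using wt(3) by simp
    then show "u \<in> {u. u mod N = u \<and> u mod M \<in> S}" using reduced_iff[OF wt(1)] wt by simp
  qed
  moreover have "inj_on (\<lambda>(w, t). w + M * t) (S \<times> L)"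
  proof (rule inj_onI, clarify)
    fix w t w' t' assume "w \<in> S" "w' \<in> S" and eq: "w + M * t = w' + M * t'"
    then have "w mod M = w" "w' mod M = w'" using S by auto
    then have "w = w'" using arg_cong[OF eq, of "\<lambda>x. x mod M"] by simp
    then show "w = w' \<and> t = t'" using eq M by simp
  qed
  moreover have "finite S" using S finite_reduced_mod[OF M] by (rule finite_subset)
  ultimately show ?thesis
    by (simp add: card_image card_cartesian_product L_def card_polys_degree_less)
qed

section \<open>Prime powers dividing p-th powers in characteristic p\<close>

lemma diff_power_CHAR:
  fixes x y :: "'a::comm_ring_1"
  assumes "prime CHAR('a)"
  shows "(x - y) ^ CHAR('a) = x ^ CHAR('a) - y ^ CHAR('a)"
  using freshmans_dream[OF assms refl, of x "- y"] minus_power_prime_CHAR[OF refl assms, of y] by simp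

lemma CHAR_eq_prime_of_card:
  assumes "prime p" "card (UNIV :: 'a::{field,finite} set) = p ^ s"
  shows "CHAR('a) = p"
proof -
  have "prime CHAR('a)" by (simp add: finite_imp_CHAR_pos prime_CHAR_semidom)
  moreover have "CHAR('a) dvd p ^ s" using CHAR_dvd_CARD[where 'a='a] assms(2) by simp
  ultimately show ?thesis using assms(1) prime_dvd_power primes_dvd_imp_eq by blast
qed

lemma power_dvd_power_mult_iff:
  fixes P z :: "'a::idom"
  assumes "P \<noteq> 0" "\<not> P dvd z"
  shows "P ^ a dvd P ^ e * z \<longleftrightarrow> a \<le> e"
proof
  assume dvd: "P ^ a dvd P ^ e * z"
  show "a \<le> e"
  proof (rule ccontr)
    assume "\<not> a \<le> e"
    then have "P ^ Suc e dvd P ^ a" by (intro le_imp_power_dvd) simp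
    then have "P ^ e * P dvd P ^ a" by (simp add: mult.commute)
    then have "P ^ e * P dvd P ^ e * z" using dvd by (rule dvd_trans)
    then show False using assms by (simp add: dvd_mult_cancel_left)
  qed
qed (simp add: le_imp_power_dvd dvd_mult2)

lemma poly_factor_out_prime_power:
  fixes P y :: "'a::field poly"
  assumes P: "prime_elem P" and "y \<noteq> 0"
  shows "\<exists>e z. y = P ^ e * z \<and> \<not> P dvd z"
  using \<open>y \<noteq> 0\<close>
proof (induction "degree y" arbitrary: y rule: less_induct)
  case less
  show ?case
  proof (cases "P dvd y")
    case True
    then obtain y' where y': "y = P * y'" by (elim dvdE)
    have "degree P > 0" using P by (auto simp: prime_elem_def is_unit_iff_degree)
    then have "y' \<noteq> 0" "degree y' < degree y" using y' less.prems by (auto simp: degree_mult_eq)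
    then obtain e z where "y' = P ^ e * z" "\<not> P dvd z" using less.hyps by blast
    then show ?thesis using y' by (intro exI[of _ "Suc e"] exI[of _ z]) (simp add: mult.assoc)
  qed (auto intro: exI[of _ 0])
qed

lemma poly_prime_elem_power_dvd_power_iff:
  fixes P y :: "'a::field poly"
  assumes P: "prime_elem P" and p: "p > 0"
  shows "P ^ a dvd y ^ p \<longleftrightarrow> P ^ ((a + p - 1) div p) dvd y"
proof (cases "y = 0")
  case False
  then obtain e z where y: "y = P ^ e * z" and z: "\<not> P dvd z"
    using poly_factor_out_prime_power[OF P] by blast
  have P0: "P \<noteq> 0" using P by auto
  have "\<not> P dvd z ^ p" using z P prime_elem_dvd_power by blast
  moreover have "y ^ p = P ^ (p * e) * z ^ p" using y by (simp add: power_mult_distrib power_mult mult.commute)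
  ultimately have "P ^ a dvd y ^ p \<longleftrightarrow> a \<le> p * e" using P0 by (simp add: power_dvd_power_mult_iff)
  also have "\<dots> \<longleftrightarrow> (a + p - 1) div p \<le> e" using div_round_up_le_iff[OF p] by presburger
  also have "\<dots> \<longleftrightarrow> P ^ ((a + p - 1) div p) dvd y" using y z P0 by (simp add: power_dvd_power_mult_iff)
  finally show ?thesis .
qed (use p in \<open>simp add: zero_power\<close>)

lemma prime_elem_power_dvd_CHAR_power_minus_one_iff:
  fixes P x :: "'a::field poly"
  assumes "prime CHAR('a)" "prime_elem P"
  shows "P ^ a dvd x ^ CHAR('a) - 1 \<longleftrightarrow> P ^ ((a + CHAR('a) - 1) div CHAR('a)) dvd x - 1"
  using diff_power_CHAR[of x 1] poly_prime_elem_power_dvd_power_iff[OF assms(2), of "CHAR('a)" a "x - 1"]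
    assms(1) prime_gt_0_nat by simp

lemma dvd_power_minus_one_mod_iff:
  fixes M u :: "'a::euclidean_ring_cancel"
  shows "M dvd u ^ N - 1 \<longleftrightarrow> M dvd (u mod M) ^ N - 1"
proof -
  have "(u mod M) ^ N mod M = u ^ N mod M" by (rule power_mod)
  then show ?thesis by (simp add: mod_eq_dvd_iff[symmetric])
qed

section \<open>Roots of unity in the unit group of the residue ring\<close>

definition roots_of_unity_mod :: "'a::field poly \<Rightarrow> nat \<Rightarrow> 'a poly set" where
  "roots_of_unity_mod M N = {u. u mod M = u \<and> M dvd u ^ N - 1}"

lemma roots_of_unity_mod_subset: "roots_of_unity_mod M N \<subseteq> {u. u mod M = u}"
  by (auto simp: roots_of_unity_mod_def)

lemma monoid_poly_residue_ring: "monoid (poly_residue_ring M)"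
  by (rule monoidI) (auto simp: poly_residue_ring_def mod_simps mult.assoc)

lemma nat_pow_poly_residue_ring: "x [^]\<^bsub>poly_residue_ring M\<^esub> (k :: nat) = x ^ k mod M"
  by (induction k) (auto simp: poly_residue_ring_def mod_simps mult.commute)

lemma group_poly_residue_units: "group (poly_residue_units M)"
  unfolding poly_residue_units_def by (rule monoid.units_group[OF monoid_poly_residue_ring])

lemma finite_carrier_poly_residue_units:
  fixes M :: "'a::{field,finite} poly"
  assumes "M \<noteq> 0"
  shows "finite (carrier (poly_residue_units M))"
proof (rule finite_subset[OF _ finite_reduced_mod[OF assms]])
  show "carrier (poly_residue_units M) \<subseteq> {f. f mod M = f}"
    by (auto simp: poly_residue_units_def units_of_carrier Units_def poly_residue_ring_def)
qed

lemma Units_poly_residue_ringI: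
  assumes "N > 0" and g: "g mod M = g" "g ^ N mod M = 1 mod M"
  shows "g \<in> Units (poly_residue_ring M)"
proof -
  let ?R = "poly_residue_ring M"
  have "g ^ (N - 1) * g = g ^ N" using assms(1) by (simp add: power_eq_if)
  then have inv: "(g ^ (N - 1) mod M) * g mod M = 1 mod M" using g(2) by (simp add: mod_simps)
  show ?thesis
    unfolding Units_def
  proof (intro CollectI conjI bexI)
    show "g \<in> carrier ?R" "g ^ (N - 1) mod M \<in> carrier ?R"
      using g(1) by (simp_all add: poly_residue_ring_def)
    show "g ^ (N - 1) mod M \<otimes>\<^bsub>?R\<^esub> g = \<one>\<^bsub>?R\<^esub>" "g \<otimes>\<^bsub>?R\<^esub> (g ^ (N - 1) mod M) = \<one>\<^bsub>?R\<^esub>"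
      using inv by (simp_all add: poly_residue_ring_def mult.commute)
  qed
qed

lemma poly_residue_units_pow_eq_one:
  assumes "N > 0"
  shows "{g \<in> carrier (poly_residue_units M). g [^]\<^bsub>poly_residue_units M\<^esub> N = \<one>\<^bsub>poly_residue_units M\<^esub>}
         = roots_of_unity_mod M N"
proof -
  let ?R = "poly_residue_ring M"
  interpret monoid ?R by (rule monoid_poly_residue_ring)
  have "g \<in> Units ?R \<and> g [^]\<^bsub>units_of ?R\<^esub> N = \<one>\<^bsub>?R\<^esub> \<longleftrightarrow> g \<in> roots_of_unity_mod M N" for g
  proof
    assume g: "g \<in> Units ?R \<and> g [^]\<^bsub>units_of ?R\<^esub> N = \<one>\<^bsub>?R\<^esub>"
    then have "g \<in> carrier ?R" by (simp add: Units_closed)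
    moreover have "g ^ N mod M = g [^]\<^bsub>units_of ?R\<^esub> N"
      using conjunct1[OF g] by (simp add: units_of_pow nat_pow_poly_residue_ring)
    ultimately show "g \<in> roots_of_unity_mod M N"
      using g by (simp add: poly_residue_ring_def roots_of_unity_mod_def mod_eq_dvd_iff)
  next
    assume "g \<in> roots_of_unity_mod M N"
    then have g: "g mod M = g" "g ^ N mod M = 1 mod M" by (simp_all add: roots_of_unity_mod_def mod_eq_dvd_iff)
    then have "g \<in> Units ?R" using assms by (rule Units_poly_residue_ringI[rotated])
    moreover have "\<one>\<^bsub>?R\<^esub> = 1 mod M" by (simp add: poly_residue_ring_def)
    ultimately show "g \<in> Units ?R \<and> g [^]\<^bsub>units_of ?R\<^esub> N = \<one>\<^bsub>?R\<^esub>"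
      using g(2) by (simp add: units_of_pow nat_pow_poly_residue_ring)
  qed
  then show ?thesis unfolding poly_residue_units_def units_of_carrier units_of_one by blast
qed

lemma card_roots_of_unity_mod_prime_power:
  fixes P :: "'a::{field,finite} poly" and \<alpha> k :: nat
  assumes p: "prime CHAR('a)" and P: "prime_elem P" and k: "k \<ge> 1"
  defines "\<delta> \<equiv> (\<alpha> + CHAR('a) - 1) div CHAR('a)"
  shows "card (roots_of_unity_mod (P ^ \<alpha>) (CHAR('a) ^ k)) =
         card (UNIV :: 'a set) ^ (degree P * (\<alpha> - \<delta>)) * card (roots_of_unity_mod (P ^ \<delta>) (CHAR('a) ^ (k - 1)))"
proof -
  let ?p = "CHAR('a)"
  have "?p > 0" using p prime_gt_0_nat by blast
  have P0: "P \<noteq> 0" using P by auto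
  have "\<delta> \<le> \<alpha>" unfolding \<delta>_def using div_round_up_le_iff[OF \<open>?p > 0\<close>] \<open>?p > 0\<close> by simp
  have "?p ^ k = ?p ^ (k - 1) * ?p" using k by (cases k) auto
  then have power_k: "u ^ (?p ^ k) = (u ^ (?p ^ (k - 1))) ^ ?p" for u :: "'a poly"
    by (simp add: power_mult)
  have "P ^ \<alpha> dvd u ^ (?p ^ k) - 1 \<longleftrightarrow> u mod P ^ \<delta> \<in> roots_of_unity_mod (P ^ \<delta>) (?p ^ (k - 1))"
    for u :: "'a poly"
  proof -
    have "P ^ \<alpha> dvd u ^ (?p ^ k) - 1 \<longleftrightarrow> P ^ \<delta> dvd u ^ (?p ^ (k - 1)) - 1"
      unfolding power_k \<delta>_def
      using prime_elem_power_dvd_CHAR_power_minus_one_iff[of P \<alpha>] p P by simp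
    also have "\<dots> \<longleftrightarrow> P ^ \<delta> dvd (u mod P ^ \<delta>) ^ (?p ^ (k - 1)) - 1"
      by (rule dvd_power_minus_one_mod_iff)
    finally show ?thesis by (simp add: roots_of_unity_mod_def)
  qed
  then have roots_eq: "roots_of_unity_mod (P ^ \<alpha>) (?p ^ k) =
             {u. u mod P ^ \<alpha> = u \<and> u mod P ^ \<delta> \<in> roots_of_unity_mod (P ^ \<delta>) (?p ^ (k - 1))}"
    by (auto simp: roots_of_unity_mod_def[of "P ^ \<alpha>"])
  have "degree (P ^ \<alpha>) - degree (P ^ \<delta>) = degree P * (\<alpha> - \<delta>)"
    by (simp add: degree_power_eq P0 diff_mult_distrib2 mult.commute)
  moreover have "P ^ \<delta> dvd P ^ \<alpha>" using \<open>\<delta> \<le> \<alpha>\<close> by (rule le_imp_power_dvd)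
  ultimately show ?thesis
    unfolding roots_eq using card_mod_preimage[OF _ _ roots_of_unity_mod_subset, of "P ^ \<delta>" "P ^ \<alpha>"] P0
    by simp
qed

lemma cyc_sub_count_mult_totient:
  fixes P :: "'a::{field,finite} poly"
  assumes p: "prime p" and P: "P \<noteq> 0" and n: "n \<ge> 1"
  shows "cyc_sub_count P p n \<beta> * totient (p ^ n) =
         card (roots_of_unity_mod (P ^ \<beta>) (p ^ n)) - card (roots_of_unity_mod (P ^ \<beta>) (p ^ (n - 1)))"
proof -
  let ?G = "poly_residue_units (P ^ \<beta>)"
  interpret group ?G by (rule group_poly_residue_units)
  have fin: "finite (carrier ?G)" using P by (simp add: finite_carrier_poly_residue_units)
  have roots: "{g \<in> carrier ?G. g [^]\<^bsub>?G\<^esub> (p ^ k) = \<one>\<^bsub>?G\<^esub>} = roots_of_unity_mod (P ^ \<beta>) (p ^ k)" for k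
    using p prime_gt_0_nat by (intro poly_residue_units_pow_eq_one) simp
  show ?thesis
    using card_ord_eq_cyclic_subgroups_mult_totient[OF fin, of "p ^ n"] card_ord_eq_prime_power[OF fin p n]
    by (simp add: roots cyc_sub_count_def)
qed

theorem proposition5p5:
  fixes P :: "'a::{field,finite} poly"
    and p s d n \<alpha> :: nat
  assumes "prime p"
    and "card (UNIV :: 'a set) = p ^ s"
    and "lead_coeff P = 1"
    and "irreducible P"
    and "degree P = d"
    and "n \<ge> 2"
  defines "\<delta> \<equiv> nat (\<lfloor>(real \<alpha> - 1) / real p\<rfloor> + 1)"
  shows "real (cyc_sub_count P p n \<alpha>) =
           real (card (UNIV :: 'a set)) ^ (d * (\<alpha> - nat \<lceil>real \<alpha> / real p\<rceil>)) / real p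
             * real (cyc_sub_count P p (n - 1) \<delta>)"
proof -
  have p: "prime p" "p > 0" using assms(1) prime_gt_0_nat by auto
  have CHAR: "CHAR('a) = p" using assms(1,2) by (rule CHAR_eq_prime_of_card)
  have P: "prime_elem P" "P \<noteq> 0" using assms(4) by (auto intro: field_poly_irreducible_imp_prime)
  have \<delta>: "\<delta> = (\<alpha> + p - 1) div p" "nat \<lceil>real \<alpha> / real p\<rceil> = (\<alpha> + p - 1) div p"
    unfolding \<delta>_def using p(2) by (simp_all add: nat_floor_pred_divide_eq nat_ceiling_divide_eq)
  define Q where "Q = card (UNIV :: 'a set) ^ (d * (\<alpha> - \<delta>))"
  define N where "N \<beta> k = card (roots_of_unity_mod (P ^ \<beta>) (p ^ k))" for \<beta> k
  have step: "N \<alpha> k = Q * N \<delta> (k - 1)" if "k \<ge> 1" for k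
    using card_roots_of_unity_mod_prime_power[OF _ P(1) that, of \<alpha>] p(1) assms(5)
    unfolding N_def Q_def \<delta>(1) CHAR by simp
  have count: "cyc_sub_count P p k \<beta> * totient (p ^ k) = N \<beta> k - N \<beta> (k - 1)" if "k \<ge> 1" for k \<beta>
    unfolding N_def using cyc_sub_count_mult_totient[OF p(1) P(2) that] .
  have "cyc_sub_count P p n \<alpha> * p * totient (p ^ (n - 1)) = N \<alpha> n - N \<alpha> (n - 1)"
    using count[of n \<alpha>] totient_prime_power_eq_mult[OF p(1) assms(6)] assms(6) by (simp add: ac_simps)
  also have "\<dots> = Q * cyc_sub_count P p (n - 1) \<delta> * totient (p ^ (n - 1))"
    using step[of n] step[of "n - 1"] count[of "n - 1" \<delta>] assms(6)
    by (simp add: diff_mult_distrib2 ac_simps)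
  finally have "cyc_sub_count P p n \<alpha> * p = Q * cyc_sub_count P p (n - 1) \<delta>"
    using p(2) by simp
  then have "real (cyc_sub_count P p n \<alpha>) * real p = real Q * real (cyc_sub_count P p (n - 1) \<delta>)"
    by (metis of_nat_mult)
  then show ?thesis using p(2) by (simp add: Q_def \<delta> field_simps)
qed

end
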